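(* Let $S$ be a nonempty subset of $\mathbb{Z}$ and $\mathcal{T}\subseteq\mathbb{N}$. Then for every positive integer $n<|S|$, the generalized integer $[n]_{S,\mathcal{T}}:=\dfrac{n!_{S,\mathcal{T}}}{(n-1)!_{S,\mathcal{T}}}$ is a positive integer.
   Context: $\mathbb{N}=\{0,1,2,\dots\}$. For an integer $b\ge0$ and $a\in\mathbb{Z}$ define $\operatorname{ord}_b(a):=\sup\{k\in\mathbb{N}: a\mathbb{Z}\subseteq b^k\mathbb{Z}\}$ (convention $0^0=1$); thus for $b\ge2$ it is the largest $k$ with $b^k\mid a$ ($+\infty$ for $a=0$), $\operatorname{ord}_0(a)=+\infty$ if $a=0$ and $0$ otherwise, and $\operatorname{ord}_1(a)=+\infty$. For nonempty $S\subseteq\mathbb{Z}$, a $b$-ordering of $S$ is a sequence $(a_i)_{i\ge0}$ in $S$ such that for each $i\ge1$, $a_i$ attains $\min_{a'\in S}\sum_{j=0}^{i-1}\operatorname{ord}_b(a'-a_j)$; the $b$-exponent sequence is $\alpha_k(S,b):=\sum_{j=0}^{k-1}\operatorname{ord}_b(a_k-a_j)$ for any $b$-ordering (independent of the choice). For $\mathcal{T}\subseteq\mathbb{N}$ the generalized factorial is $k!_{S,\mathcal{T}}:=\prod_{b\in\mathcal{T}}b^{\alpha_k(S,b)}$, with conventions $b^{+\infty}=0$ for $b=0$ and $b\ge2$, $1^{+\infty}=1$, and $b^0=1$ for all $b\in\mathbb{N}$. *)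

theory Defs
  imports Main "HOL-Library.Extended_Nat"
begin

definition ordb :: "nat \<Rightarrow> int \<Rightarrow> enat" where
  "ordb b a = Sup (enat ` {k. (int b) ^ k dvd a})"

definition is_bordering :: "int set \<Rightarrow> nat \<Rightarrow> (nat \<Rightarrow> int) \<Rightarrow> bool" where
  "is_bordering S b a \<longleftrightarrow> (\<forall>i. a i \<in> S) \<and>
     (\<forall>i\<ge>1. \<forall>a'\<in>S. (\<Sum>j<i. ordb b (a i - a j)) \<le> (\<Sum>j<i. ordb b (a' - a j)))"

definition alpha :: "nat \<Rightarrow> int set \<Rightarrow> nat \<Rightarrow> enat" where
  "alpha k S b = (let a = (SOME a. is_bordering S b a) in (\<Sum>j<k. ordb b (a k - a j)))"

definition epow :: "nat \<Rightarrow> enat \<Rightarrow> nat" where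
  "epow b e = (case e of enat m \<Rightarrow> b ^ m | \<infinity> \<Rightarrow> (if b = 1 then 1 else 0))"

text \<open>Generalized factorial k!_{S,T} = product over b \<in> T of b^{alpha_k(S,b)}; the
  product is taken over the (finite) set of factors different from 1; if that set
  were infinite the product would be undefined and we set it to 0.\<close>
definition genfact :: "nat \<Rightarrow> int set \<Rightarrow> nat set \<Rightarrow> nat" where
  "genfact k S T = (let F = {b \<in> T. epow b (alpha k S b) \<noteq> 1} in
     if finite F then (\<Prod>b\<in>F. epow b (alpha k S b)) else 0)"

end

theory Submission
  imports Defs
begin

(* Since a_(k+1) is an admissible choice at step k of a b-ordering, alpha_k(S,b) is monotone in k,
   so every factor b^alpha_k(S,b) divides b^alpha_(k+1)(S,b).  For k < |S| some element of S differs
   from a_0, ..., a_(k-1); this forces alpha_k(S,0) = 0 and alpha_k(S,b) < \<infinity> for b \<ge> 2, so every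
   factor is positive.  Finally, alpha_k(S,b) > 0 means that S meets at most k residue classes
   mod b; taking k+1 elements of S, b must divide one of their finitely many differences, so only
   finitely many factors differ from 1. *)

lemma ordb_eq_0_if_not_dvd: "\<not> int b dvd x \<Longrightarrow> ordb b x = 0"
proof -
  assume "\<not> int b dvd x"
  then have "k = 0" if "int b ^ k dvd x" for k
    using that dvd_power dvd_trans gr0I by metis
  then have "{k. int b ^ k dvd x} = {0}"
    by auto
  then show ?thesis unfolding ordb_def by (simp add: zero_enat_def)
qed

lemma ordb_ne_infinity:
  assumes "b \<ge> 2" "x \<noteq> 0"
  shows "ordb b x \<noteq> \<infinity>"
proof -
  have "k \<le> nat \<bar>x\<bar>" if "int b ^ k dvd x" for k
  proof -
    have "int k < 2 ^ k"
      by (metis less_exp of_nat_less_iff of_nat_numeral of_nat_power)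
    also have "\<dots> \<le> int b ^ k"
      using assms(1) by (intro power_mono) auto
    also have "\<dots> \<le> \<bar>x\<bar>"
      using dvd_imp_le_int[OF assms(2) that] by simp
    finally show ?thesis by linarith
  qed
  then have "ordb b x \<le> enat (nat \<bar>x\<bar>)"
    unfolding ordb_def by (intro Sup_least) auto
  then show ?thesis by (auto dest: enat_ile)
qed

lemma sum_enat_ne_infinity:
  "(\<And>j. j \<in> A \<Longrightarrow> f j \<noteq> (\<infinity>::enat)) \<Longrightarrow> sum f A \<noteq> \<infinity>"
  by (induct A rule: infinite_finite_induct) (auto simp: plus_eq_infty_iff_enat)

lemma epow_eq_1_iff: "epow b e = 1 \<longleftrightarrow> b = 1 \<or> e = 0"
  by (cases e) (auto simp: epow_def zero_enat_def)

lemma epow_pos_iff: "epow b e > 0 \<longleftrightarrow> b = 1 \<or> (e \<noteq> \<infinity> \<and> (b = 0 \<longrightarrow> e = 0))"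
  by (cases e) (auto simp: epow_def zero_enat_def)

lemma epow_dvd_epow: "e \<le> e' \<Longrightarrow> epow b e dvd epow b e'"
  by (cases e; cases e') (auto simp: epow_def le_imp_power_dvd)

lemma ex_least_on:
  fixes f :: "'a \<Rightarrow> 'b::wellorder"
  assumes "S \<noteq> {}"
  shows "\<exists>y\<in>S. \<forall>z\<in>S. f y \<le> f z"
proof -
  obtain v where "v \<in> f ` S" "\<forall>w<v. w \<notin> f ` S"
    using assms exists_least_iff[of "\<lambda>v. v \<in> f ` S"] by blast
  then show ?thesis by (auto simp: not_less[symmetric])
qed

lemma greedy_sequence_exists:
  assumes "\<And>xs. \<exists>y. P xs y"
  shows "\<exists>a. \<forall>i. P (map a [0..<i]) (a i)"
proof -
  define c where "c xs = (SOME y. P xs y)" for xs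
  define prefix where "prefix = rec_nat [] (\<lambda>_ xs. xs @ [c xs])"
  have "prefix i = map (\<lambda>i. c (prefix i)) [0..<i]" for i
    by (induct i) (simp_all add: prefix_def)
  moreover have "P xs (c xs)" for xs
    unfolding c_def using assms by (rule someI_ex)
  ultimately have "P (map (\<lambda>i. c (prefix i)) [0..<i]) (c (prefix i))" for i
    by metis
  then show ?thesis by blast
qed

lemma is_bordering_exists:
  assumes "S \<noteq> {}"
  shows "\<exists>a. is_bordering S b a"
proof -
  let ?cost = "\<lambda>xs y. \<Sum>j<length xs. ordb b (y - xs ! j)"
  have "\<exists>y. y \<in> S \<and> (\<forall>z\<in>S. ?cost xs y \<le> ?cost xs z)" for xs
    using ex_least_on[OF assms, of "?cost xs"] by blast
  then obtain a where "a i \<in> S \<and> (\<forall>z\<in>S. ?cost (map a [0..<i]) (a i) \<le> ?cost (map a [0..<i]) z)"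
    for i
    using greedy_sequence_exists[of "\<lambda>xs y. y \<in> S \<and> (\<forall>z\<in>S. ?cost xs y \<le> ?cost xs z)"]
    by blast
  then have "is_bordering S b a"
    unfolding is_bordering_def by simp
  then show ?thesis by blast
qed

definition bordering :: "int set \<Rightarrow> nat \<Rightarrow> nat \<Rightarrow> int" where
  "bordering S b = (SOME a. is_bordering S b a)"

lemma is_bordering_bordering: "S \<noteq> {} \<Longrightarrow> is_bordering S b (bordering S b)"
  unfolding bordering_def using is_bordering_exists by (rule someI_ex)

lemma alpha_eq: "alpha k S b = (\<Sum>j<k. ordb b (bordering S b k - bordering S b j))"
  unfolding alpha_def bordering_def Let_def ..

lemma alpha_le_sum:
  assumes "z \<in> S"
  shows "alpha k S b \<le> (\<Sum>j<k. ordb b (z - bordering S b j))"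
proof (cases "k = 0")
  case False
  have "S \<noteq> {}" using assms by blast
  with False show ?thesis
    using is_bordering_bordering assms unfolding alpha_eq is_bordering_def by auto
qed (simp add: alpha_eq)

lemma alpha_mono_Suc:
  assumes "S \<noteq> {}"
  shows "alpha k S b \<le> alpha (Suc k) S b"
proof -
  have "bordering S b (Suc k) \<in> S"
    using is_bordering_bordering[OF assms] unfolding is_bordering_def by blast
  then have "alpha k S b \<le> (\<Sum>j<k. ordb b (bordering S b (Suc k) - bordering S b j))"
    by (rule alpha_le_sum)
  also have "\<dots> \<le> alpha (Suc k) S b"
    unfolding alpha_eq by simp
  finally show ?thesis .
qed

lemma ex_not_in_image_lessThan:
  assumes "infinite S \<or> k < card S"
  shows "\<exists>z\<in>S. z \<notin> f ` {..<k}"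
proof (rule ccontr)
  assume "\<not> ?thesis"
  then have "S \<subseteq> f ` {..<k}" by blast
  then have "finite S" "card S \<le> k"
    using finite_surj card_mono[of "f ` {..<k}" S] card_image_le[of "{..<k}" f] by auto
  with assms show False by simp
qed

lemma alpha_0_eq_0:
  assumes "infinite S \<or> k < card S"
  shows "alpha k S 0 = 0"
proof -
  obtain z where "z \<in> S" "z \<notin> bordering S 0 ` {..<k}"
    using ex_not_in_image_lessThan[OF assms] by blast
  then have "alpha k S 0 \<le> (\<Sum>j<k. ordb 0 (z - bordering S 0 j))"
    by (intro alpha_le_sum)
  also have "\<dots> = 0"
    using \<open>z \<notin> _\<close> by (intro sum.neutral) (auto intro!: ordb_eq_0_if_not_dvd)
  finally show ?thesis by simp
qed

lemma alpha_ne_infinity: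
  assumes "infinite S \<or> k < card S" "b \<ge> 2"
  shows "alpha k S b \<noteq> \<infinity>"
proof -
  obtain z where "z \<in> S" "z \<notin> bordering S b ` {..<k}"
    using ex_not_in_image_lessThan[OF assms(1)] by blast
  then have "alpha k S b \<le> (\<Sum>j<k. ordb b (z - bordering S b j))"
    by (intro alpha_le_sum)
  moreover have "(\<Sum>j<k. ordb b (z - bordering S b j)) \<noteq> \<infinity>"
    using \<open>z \<notin> _\<close> assms(2) by (intro sum_enat_ne_infinity ordb_ne_infinity) auto
  ultimately show ?thesis by (auto dest: enat_ile)
qed

lemma alpha_ne_0_imp_congruent:
  assumes "alpha k S b \<noteq> 0" "z \<in> S"
  shows "\<exists>j<k. int b dvd z - bordering S b j"
proof (rule ccontr)
  assume "\<not> ?thesis"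
  then have "(\<Sum>j<k. ordb b (z - bordering S b j)) = 0"
    by (intro sum.neutral) (auto intro: ordb_eq_0_if_not_dvd)
  then show False
    using alpha_le_sum[OF assms(2), of k b] assms(1) by simp
qed

lemma alpha_ne_0_imp_collision:
  assumes "alpha k S b \<noteq> 0" "X \<subseteq> S" "k < card X"
  shows "\<exists>x\<in>X. \<exists>y\<in>X. x \<noteq> y \<and> int b dvd x - y"
proof -
  have "(\<lambda>x. x mod int b) ` X \<subseteq> (\<lambda>j. bordering S b j mod int b) ` {..<k}"
    using alpha_ne_0_imp_congruent[OF assms(1)] assms(2) by (force simp: mod_eq_dvd_iff)
  then have "card ((\<lambda>x. x mod int b) ` X) \<le> card ((\<lambda>j. bordering S b j mod int b) ` {..<k})"
    by (intro card_mono) auto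
  also have "\<dots> \<le> k"
    using card_image_le[of "{..<k}"] by simp
  finally have "card ((\<lambda>x. x mod int b) ` X) < card X"
    using assms(3) by simp
  then have "\<not> inj_on (\<lambda>x. x mod int b) X"
    by (rule pigeonhole)
  then show ?thesis
    by (auto simp: inj_on_def mod_eq_dvd_iff)
qed

lemma finite_alpha_ne_0:
  assumes "infinite S \<or> k < card S"
  shows "finite {b. 2 \<le> b \<and> alpha k S b \<noteq> 0}"
proof -
  obtain X where X: "X \<subseteq> S" "finite X" "card X = Suc k"
    using assms infinite_arbitrarily_large obtain_subset_with_card_n[of "Suc k" S]
    by (metis Suc_leI card.infinite nat.simps(3))
  have "{b. 2 \<le> b \<and> alpha k S b \<noteq> 0} \<subseteq> (\<Union>x\<in>X. \<Union>y\<in>X. {..nat \<bar>x - y\<bar>})"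
  proof safe
    fix b assume "2 \<le> b" "alpha k S b \<noteq> 0"
    then obtain x y where "x \<in> X" "y \<in> X" "x \<noteq> y" "int b dvd x - y"
      using alpha_ne_0_imp_collision[of k S b X] X by auto
    then have "b \<le> nat \<bar>x - y\<bar>"
      using dvd_imp_le_int[of "x - y" "int b"] by simp
    with \<open>x \<in> X\<close> \<open>y \<in> X\<close> show "b \<in> (\<Union>x\<in>X. \<Union>y\<in>X. {..nat \<bar>x - y\<bar>})" by blast
  qed
  then show ?thesis
    by (rule finite_subset) (use X(2) in auto)
qed

lemma epow_alpha_pos:
  assumes "infinite S \<or> k < card S"
  shows "0 < epow b (alpha k S b)"
proof -
  consider "b = 0" | "b = 1" | "2 \<le> b"
    by linarith
  then show ?thesis
    using alpha_0_eq_0[OF assms] alpha_ne_infinity[OF assms] by cases (auto simp: epow_pos_iff)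
qed

lemma finite_genfact_support:
  assumes "infinite S \<or> k < card S"
  shows "finite {b \<in> T. epow b (alpha k S b) \<noteq> 1}"
proof (rule finite_subset)
  show "{b \<in> T. epow b (alpha k S b) \<noteq> 1} \<subseteq> {b. 2 \<le> b \<and> alpha k S b \<noteq> 0}"
  proof safe
    fix b assume "epow b (alpha k S b) \<noteq> 1"
    then have "b \<noteq> 1" "alpha k S b \<noteq> 0"
      by (metis epow_eq_1_iff)+
    moreover have "b \<noteq> 0"
      using alpha_0_eq_0[OF assms] \<open>alpha k S b \<noteq> 0\<close> by metis
    ultimately show "2 \<le> b" "alpha k S b = 0 \<Longrightarrow> False"
      by auto
  qed
qed (rule finite_alpha_ne_0[OF assms])

lemma genfact_eq_prod:
  assumes "finite F" "F \<subseteq> T" "{b \<in> T. epow b (alpha k S b) \<noteq> 1} \<subseteq> F"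
  shows "genfact k S T = (\<Prod>b\<in>F. epow b (alpha k S b))"
proof -
  have "finite {b \<in> T. epow b (alpha k S b) \<noteq> 1}"
    using assms(1,3) by (rule finite_subset[rotated])
  then have "genfact k S T = (\<Prod>b \<in> {b \<in> T. epow b (alpha k S b) \<noteq> 1}. epow b (alpha k S b))"
    unfolding genfact_def Let_def by simp
  also have "\<dots> = (\<Prod>b\<in>F. epow b (alpha k S b))"
    using assms by (intro prod.mono_neutral_left) auto
  finally show ?thesis .
qed

lemma genfact_pos:
  assumes "infinite S \<or> k < card S"
  shows "0 < genfact k S T"
proof -
  have "genfact k S T = (\<Prod>b \<in> {b \<in> T. epow b (alpha k S b) \<noteq> 1}. epow b (alpha k S b))"
    by (intro genfact_eq_prod finite_genfact_support[OF assms]) auto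
  then show ?thesis
    using epow_alpha_pos[OF assms] by (simp add: prod_pos)
qed

lemma genfact_dvd_genfact_Suc:
  assumes "infinite S \<or> Suc k < card S"
  shows "genfact k S T dvd genfact (Suc k) S T"
proof -
  define F where "F = {b \<in> T. epow b (alpha (Suc k) S b) \<noteq> 1}"
  have "S \<noteq> {}"
    using assms by auto
  then have factor_dvd: "epow b (alpha k S b) dvd epow b (alpha (Suc k) S b)" for b
    by (intro epow_dvd_epow alpha_mono_Suc)
  have "finite F"
    unfolding F_def using assms by (rule finite_genfact_support)
  moreover have "epow b (alpha k S b) = 1" if "epow b (alpha (Suc k) S b) = 1" for b
    using factor_dvd[of b] that by simp
  then have "{b \<in> T. epow b (alpha k S b) \<noteq> 1} \<subseteq> F"
    unfolding F_def by blast
  ultimately have "genfact k S T = (\<Prod>b\<in>F. epow b (alpha k S b))"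
    by (intro genfact_eq_prod) (auto simp: F_def)
  also have "\<dots> dvd (\<Prod>b\<in>F. epow b (alpha (Suc k) S b))"
    using factor_dvd by (rule prod_dvd_prod)
  also have "\<dots> = genfact (Suc k) S T"
    using \<open>finite F\<close> by (intro genfact_eq_prod[symmetric]) (auto simp: F_def)
  finally show ?thesis .
qed

theorem theorem3p12:
  fixes S :: "int set" and T :: "nat set" and n :: nat
  assumes "S \<noteq> {}" and "n \<ge> 1" and "infinite S \<or> n < card S"
  shows "genfact (n - 1) S T > 0 \<and> genfact (n - 1) S T dvd genfact n S T
         \<and> genfact n S T div genfact (n - 1) S T > 0"
proof -
  obtain m where n: "n = Suc m"
    using assms(2) by (cases n) auto
  have pos: "0 < genfact m S T" "0 < genfact (Suc m) S T"
    using assms(3) unfolding n by (auto intro!: genfact_pos)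
  moreover have dvd: "genfact m S T dvd genfact (Suc m) S T"
    using assms(3) unfolding n by (rule genfact_dvd_genfact_Suc)
  moreover have "0 < genfact (Suc m) S T div genfact m S T"
    using pos dvd by (simp add: div_greater_zero_iff dvd_imp_le)
  ultimately show ?thesis
    unfolding n by simp
qed

end
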